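(* Let $r\ge 2$, $\pi\in\Pi_1(\{1,\dots,r\})$ and $c\in\mathcal{C}(\pi)$, and let $T=\psi_\pi(c)$ be the tree produced by the construction described in the context. Then $T\in\mathcal{E}(\pi)$ and $\kappa(T)=\omega(c,\pi)$.
   Context: Trees: an unordered increasing tree is a rooted tree on distinct positive integers, sons unordered, each son larger than its father. $\sigma_i(T)$ is the number of sons of $i$; $\kappa(T)=\prod_{i\in V(T)}x_i^{\sigma_i(T)}$ (with $x_i$ formal variables). $\Pi_1(\{1,\dots,r\})$ is the set of set partitions of $\{1,\dots,r\}$ having $\{1\}$ as a block; for such $\pi$ with $k$ blocks, index them $\pi_1,\dots,\pi_k$ so that $\mu_i=\max\pi_i$ satisfy $1=\mu_1<\mu_2<\dots<\mu_k=r$. $\mathcal{E}(\pi)$ is the set of unordered increasing trees on $\{1,\dots,r\}$ in which, for every two elements $i<j$ of the same block of $\pi$, $i$ is an ancestor of $j$. $\mathcal{C}(\pi)=\{(c_2,\dots,c_{k-1}):1\le c_i\le \mu_i\}$ (only the empty list if $k=2$), and $\omega(c,\pi)=\frac{x_{c_2}\cdots x_{c_{k-1}}}{x_{\mu_2}\cdots x_{\mu_k}}\prod_{i=1}^r x_i$. $v$-decomposition: for a vertex $v$ of an unordered increasing tree $T$ with chain $a_1<\dots<a_k=v$ from the root to $v$, removing the chain edges gives components $T^{(a_i)}$ rooted at $a_i$. Splice: for unordered increasing trees $T_1,T_2$ with disjoint vertex-sets and $v_1\in V(T_1)$, $v_2\in V(T_2)$, $v_1>v_2$, $\mathrm{spl}(T_1,v_1;T_2,v_2)$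 is the tree on $V(T_1)\cup V(T_2)$ obtained by merging the root-to-$v_1$ chain of $T_1$ and the root-to-$v_2$ chain of $T_2$ into one increasing chain (root = smallest element, ending at $v_1$) and attaching at each chain vertex its component from the $v_1$-decomposition of $T_1$ or the $v_2$-decomposition of $T_2$. Construction of $\psi_\pi(c)$: Stage 1: let $\tau_\ell$ be the increasing chain on the elements of $\pi_\ell$ ($\ell=1,\dots,k$), and set $\nu=1$. For $i=2,\dots,k-1$ (Stage $i$): if $c_i$ is a vertex of $\tau_1$ or $\tau_i$, replace $\tau_1$ by $\mathrm{spl}(\tau_i,\mu_i;\tau_1,\nu)$, discard $\tau_i$, and set $\nu=c_i$; otherwise $c_i$ is a vertex of $\tau_j$ for some $j>i$, and then replace $\tau_j$ by $\mathrm{spl}(\tau_i,\mu_i;\tau_j,c_i)$ and discard $\tau_i$. Finally (Stage $k$), $\psi_\pi(c)=\mathrm{spl}(\tau_k,\mu_k;\tau_1,\nu)$. (All splices are well defined.) *)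

theory Defs
  imports Main "HOL-Library.Disjoint_Sets"
begin

text \<open>An (unordered increasing) tree is represented by its vertex set together with
  a parent function; the parent of the root (and of non-vertices) is irrelevant.\<close>
type_synonym tree = "nat set \<times> (nat \<Rightarrow> nat)"

definition verts :: "tree \<Rightarrow> nat set" where "verts T = fst T"
definition par :: "tree \<Rightarrow> nat \<Rightarrow> nat" where "par T = snd T"

definition is_inc_tree :: "tree \<Rightarrow> bool" where
  "is_inc_tree T \<longleftrightarrow> finite (verts T) \<and> verts T \<noteq> {} \<and> 0 \<notin> verts T \<and>
     (\<forall>u\<in>verts T. u \<noteq> Min (verts T) \<longrightarrow> par T u \<in> verts T \<and> par T u < u)"

definition anc :: "tree \<Rightarrow> nat \<Rightarrow> nat set" where
  "anc T v = {u \<in> verts T. \<exists>n\<ge>1. (par T ^^ n) v = u}"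

definition rpath :: "tree \<Rightarrow> nat \<Rightarrow> nat set" where
  "rpath T v = insert v (anc T v)"

definition pred_in :: "nat set \<Rightarrow> nat \<Rightarrow> nat" where
  "pred_in C u = (if \<exists>w\<in>C. w < u then Max {w\<in>C. w < u} else 0)"

definition chain_tree :: "nat set \<Rightarrow> tree" where
  "chain_tree S = (S, \<lambda>u. if u \<in> S then pred_in S u else 0)"

definition sons :: "tree \<Rightarrow> nat \<Rightarrow> nat" where
  "sons T i = card {j \<in> verts T. j \<noteq> Min (verts T) \<and> par T j = i}"

definition kappa :: "(nat \<Rightarrow> 'a::field) \<Rightarrow> tree \<Rightarrow> 'a" where
  "kappa x T = (\<Prod>i\<in>verts T. x i ^ sons T i)"

text \<open>Splice: the root-to-v1 chain of T1 and the root-to-v2 chain of T2 are merged into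
  one increasing chain; every other vertex keeps its parent (its component of the
  v-decomposition stays attached at the same chain vertex).\<close>
definition spl :: "tree \<Rightarrow> nat \<Rightarrow> tree \<Rightarrow> nat \<Rightarrow> tree" where
  "spl T1 v1 T2 v2 =
    (let C = rpath T1 v1 \<union> rpath T2 v2 in
      (verts T1 \<union> verts T2,
       \<lambda>u. if u \<in> C then pred_in C u
           else if u \<in> verts T1 then par T1 u
           else if u \<in> verts T2 then par T2 u else 0))"

definition Pi1 :: "nat \<Rightarrow> nat set set set" where
  "Pi1 r = {\<pi>. partition_on {1..r} \<pi> \<and> {1} \<in> \<pi>}"

text \<open>mu i = max of the i-th block (1-based), blocks ordered by their maxima.\<close>
definition mu :: "nat set set \<Rightarrow> nat \<Rightarrow> nat" where
  "mu \<pi> i = sorted_list_of_set (Max ` \<pi>) ! (i - 1)"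

definition blk :: "nat set set \<Rightarrow> nat \<Rightarrow> nat set" where
  "blk \<pi> i = (THE B. B \<in> \<pi> \<and> Max B = mu \<pi> i)"

text \<open>C(pi): sequences (c_2,...,c_{k-1}) with 1 <= c_i <= mu_i, k = number of blocks.
  Only the values of c on {2..k-1} are relevant.\<close>
definition Cset :: "nat set set \<Rightarrow> (nat \<Rightarrow> nat) set" where
  "Cset \<pi> = {c. \<forall>i\<in>{2..<card \<pi>}. 1 \<le> c i \<and> c i \<le> mu \<pi> i}"

definition omega :: "(nat \<Rightarrow> 'a::field) \<Rightarrow> nat \<Rightarrow> nat set set \<Rightarrow> (nat \<Rightarrow> nat) \<Rightarrow> 'a" where
  "omega x r \<pi> c =
     (\<Prod>i\<in>{2..<card \<pi>}. x (c i)) / (\<Prod>i\<in>{2..card \<pi>}. x (mu \<pi> i)) * (\<Prod>i\<in>{1..r}. x i)"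

definition inE :: "nat \<Rightarrow> nat set set \<Rightarrow> tree \<Rightarrow> bool" where
  "inE r \<pi> T \<longleftrightarrow> is_inc_tree T \<and> verts T = {1..r} \<and>
     (\<forall>B\<in>\<pi>. \<forall>i\<in>B. \<forall>j\<in>B. i < j \<longrightarrow> i \<in> anc T j)"

text \<open>The construction psi_pi(c). State: the family tau_1..tau_k and nu.\<close>
definition psi_init :: "nat set set \<Rightarrow> (nat \<Rightarrow> tree) \<times> nat" where
  "psi_init \<pi> = (\<lambda>l. chain_tree (blk \<pi> l), 1)"

definition psi_stage :: "nat set set \<Rightarrow> (nat \<Rightarrow> nat) \<Rightarrow> nat \<Rightarrow> (nat \<Rightarrow> tree) \<times> nat
    \<Rightarrow> (nat \<Rightarrow> tree) \<times> nat" where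
  "psi_stage \<pi> c i st =
    (let \<tau> = fst st; \<nu> = snd st in
     if c i \<in> verts (\<tau> 1) \<or> c i \<in> verts (\<tau> i)
     then (\<tau>(1 := spl (\<tau> i) (mu \<pi> i) (\<tau> 1) \<nu>), c i)
     else (let j = (THE j. i < j \<and> j \<le> card \<pi> \<and> c i \<in> verts (\<tau> j)) in
           (\<tau>(j := spl (\<tau> i) (mu \<pi> i) (\<tau> j) (c i)), \<nu>)))"

definition psi :: "nat set set \<Rightarrow> (nat \<Rightarrow> nat) \<Rightarrow> tree" where
  "psi \<pi> c =
    (let st = fold (psi_stage \<pi> c) [2..<card \<pi>] (psi_init \<pi>) in
       spl (fst st (card \<pi>)) (mu \<pi> (card \<pi>)) (fst st 1) (snd st))"

end

theory Submission
  imports Defs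
begin

text \<open>Write \<open>\<kappa>(T)\<close> as the product of \<open>x (par j)\<close> over the non-root vertices \<open>j\<close> of \<open>T\<close>.
  Splicing \<open>T\<^sub>1\<close> at \<open>v\<^sub>1\<close> with \<open>T\<^sub>2\<close> at \<open>v\<^sub>2\<close> merges the two root paths into one increasing
  chain, so every ancestor relation of \<open>T\<^sub>1\<close> and \<open>T\<^sub>2\<close> survives; and since a chain \<open>C\<close> has
  weight \<open>\<Prod>j \<in> C - {Max C}. x j\<close>, the weight of the spliced tree is the product of the two
  weights times \<open>x v\<^sub>2\<close>. The construction starts from the chains on the blocks, of total weight
  \<open>W\<^sub>0 = (\<Prod>j. x j) / (\<Prod>l. x \<mu>\<^sub>l)\<close>. Stage \<open>i\<close> splices at one of \<open>\<nu>\<close> and \<open>c\<^sub>i\<close> and keeps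
  the other as the new \<open>\<nu>\<close>, so \<open>(total weight) \<cdot> x \<nu> = W\<^sub>0 \<cdot> x 1 \<cdot> x c\<^sub>2 \<cdots> x c\<^bsub>i-1\<^esub>\<close> is
  invariant, while the trees stay disjoint, cover \<open>{1..r}\<close> and keep every block on a root
  path. The final splice at \<open>\<nu>\<close> therefore gives a tree of \<open>\<E>(\<pi>)\<close> of weight
  \<open>W\<^sub>0 \<cdot> x 1 \<cdot> x c\<^sub>2 \<cdots> x c\<^bsub>k-1\<^esub> = \<omega>(c, \<pi>)\<close>.\<close>

section \<open>Increasing trees\<close>

text \<open>Setting the parent of the root and of every non-vertex to the non-vertex \<open>0\<close> makes
  \<open>anc T v\<close> exactly the set of vertices strictly above \<open>v\<close> on its path to the root.\<close>

definition inc_tree :: "tree \<Rightarrow> bool" where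
  "inc_tree T \<longleftrightarrow> is_inc_tree T \<and> par T (Min (verts T)) = 0 \<and> (\<forall>u. u \<notin> verts T \<longrightarrow> par T u = 0)"

definition edge_weight :: "(nat \<Rightarrow> 'a::comm_monoid_mult) \<Rightarrow> tree \<Rightarrow> 'a" where
  "edge_weight x T = (\<Prod>j\<in>verts T - {Min (verts T)}. x (par T j))"

lemma inc_treeD:
  assumes "inc_tree T"
  shows "finite (verts T)" "verts T \<noteq> {}" "0 \<notin> verts T" "par T (Min (verts T)) = 0"
    "\<And>u. u \<notin> verts T \<Longrightarrow> par T u = 0"
    "\<And>u. u \<in> verts T \<Longrightarrow> u \<noteq> Min (verts T) \<Longrightarrow> par T u \<in> verts T"
    "\<And>u. u \<in> verts T \<Longrightarrow> u \<noteq> Min (verts T) \<Longrightarrow> par T u < u"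
  using assms unfolding inc_tree_def is_inc_tree_def by auto

lemma anc_subset_verts: "anc T v \<subseteq> verts T"
  unfolding anc_def by auto

lemma anc_root:
  assumes T: "inc_tree T"
  shows "anc T (Min (verts T)) = {}"
proof (rule equals0I)
  have par0: "par T 0 = 0"
    using inc_treeD(3,5)[OF T] by blast
  have iter: "(par T ^^ n) (Min (verts T)) = 0" if "n \<ge> 1" for n
    using that
  proof (induction n rule: nat_induct_at_least)
    case base
    then show ?case using inc_treeD(4)[OF T] by simp
  next
    case (Suc n)
    then show ?case using par0 by simp
  qed
  fix u assume "u \<in> anc T (Min (verts T))"
  then obtain n where "n \<ge> 1" "(par T ^^ n) (Min (verts T)) = u" "u \<in> verts T"
    unfolding anc_def by blast
  then show False
    using iter inc_treeD(3)[OF T] by metis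
qed

lemma anc_par:
  assumes T: "inc_tree T" and v: "v \<in> verts T" "v \<noteq> Min (verts T)"
  shows "anc T v = insert (par T v) (anc T (par T v))"
proof -
  have iter: "(par T ^^ Suc n) v = (par T ^^ n) (par T v)" for n
    by (simp only: funpow_Suc_right o_apply)
  have pv: "par T v \<in> verts T"
    using inc_treeD(6)[OF T v] .
  show ?thesis
  proof (intro set_eqI iffI)
    fix u
    assume "u \<in> anc T v"
    then obtain n where n: "n \<ge> 1" "(par T ^^ n) v = u" "u \<in> verts T"
      unfolding anc_def by blast
    from n(1) obtain m where "n = Suc m"
      by (cases n) auto
    then have m: "(par T ^^ m) (par T v) = u"
      using n(2) iter by simp
    show "u \<in> insert (par T v) (anc T (par T v))"
    proof (cases m)
      case (Suc m')
      then have "u \<in> anc T (par T v)"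
        unfolding anc_def using m n(3) by (intro CollectI conjI exI[of _ m]) auto
      then show ?thesis by blast
    qed (use m in simp)
  next
    fix u
    assume "u \<in> insert (par T v) (anc T (par T v))"
    then consider "u = par T v" | n where "n \<ge> 1" "(par T ^^ n) (par T v) = u" "u \<in> verts T"
      unfolding anc_def by blast
    then show "u \<in> anc T v"
    proof cases
      case 1
      then show ?thesis
        unfolding anc_def using pv by (intro CollectI conjI exI[of _ 1]) auto
    next
      case (2 n)
      then show ?thesis
        unfolding anc_def using iter[of n] by (intro CollectI conjI exI[of _ "Suc n"]) auto
    qed
  qed
qed

lemma anc_less:
  assumes "inc_tree T"
  shows "v \<in> verts T \<Longrightarrow> u \<in> anc T v \<Longrightarrow> u < v"
proof (induction v rule: less_induct)
  case (less v)
  show ?case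
  proof (cases "v = Min (verts T)")
    case True
    then show ?thesis using less.prems(2) anc_root[OF assms] by simp
  next
    case False
    then have p: "par T v < v" "par T v \<in> verts T"
      using inc_treeD(6,7)[OF assms less.prems(1)] by auto
    have "u = par T v \<or> u \<in> anc T (par T v)"
      using less.prems(2) anc_par[OF assms less.prems(1) False] by blast
    then show ?thesis
      using less.IH[OF p] p(1) by (elim disjE) auto
  qed
qed

lemma anc_trans:
  assumes "u \<in> anc T v"
  shows "anc T u \<subseteq> anc T v"
proof
  fix w assume "w \<in> anc T u"
  then obtain n where n: "n \<ge> 1" "(par T ^^ n) u = w" "w \<in> verts T"
    unfolding anc_def by auto
  obtain m where "(par T ^^ m) v = u"
    using assms unfolding anc_def by auto
  then have "(par T ^^ (n + m)) v = w"
    using n(2) by (simp add: funpow_add)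
  moreover have "n + m \<ge> 1"
    using n(1) by simp
  ultimately show "w \<in> anc T v"
    unfolding anc_def using n(3) by blast
qed

lemma rpath_subset_verts: "v \<in> verts T \<Longrightarrow> rpath T v \<subseteq> verts T"
  unfolding rpath_def using anc_subset_verts by auto

lemma finite_rpath: "inc_tree T \<Longrightarrow> v \<in> verts T \<Longrightarrow> finite (rpath T v)"
  using rpath_subset_verts inc_treeD(1) finite_subset by blast

lemma rpath_eq_iterates:
  assumes "v \<in> verts T"
  shows "rpath T v = {u \<in> verts T. \<exists>n. (par T ^^ n) v = u}"
proof (intro set_eqI iffI)
  fix u assume "u \<in> rpath T v"
  then consider "u = v" | n where "(par T ^^ n) v = u" "u \<in> verts T"
    unfolding rpath_def anc_def by blast
  then show "u \<in> {u \<in> verts T. \<exists>n. (par T ^^ n) v = u}"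
  proof cases
    case 1
    have "(par T ^^ 0) v = v"
      by simp
    then show ?thesis
      using 1 assms by blast
  qed blast
next
  fix u assume "u \<in> {u \<in> verts T. \<exists>n. (par T ^^ n) v = u}"
  then obtain n where n: "(par T ^^ n) v = u" "u \<in> verts T"
    by blast
  show "u \<in> rpath T v"
  proof (cases n)
    case (Suc m)
    then have "u \<in> anc T v"
      unfolding anc_def using n by (intro CollectI conjI exI[of _ n]) auto
    then show ?thesis
      unfolding rpath_def by blast
  qed (use n in \<open>simp add: rpath_def\<close>)
qed

lemma rpath_le: "inc_tree T \<Longrightarrow> v \<in> verts T \<Longrightarrow> u \<in> rpath T v \<Longrightarrow> u \<le> v"
  unfolding rpath_def using anc_less by fastforce

lemma anc_eq_rpath_less:
  assumes T: "inc_tree T" and v: "v \<in> verts T" and u: "u \<in> rpath T v"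
  shows "anc T u = {w \<in> rpath T v. w < u}"
proof (intro set_eqI iffI)
  have uV: "u \<in> verts T"
    using rpath_subset_verts[OF v] u by blast
  fix w
  assume "w \<in> anc T u"
  moreover have "anc T u \<subseteq> anc T v"
    using u anc_trans unfolding rpath_def by blast
  ultimately show "w \<in> {w \<in> rpath T v. w < u}"
    using anc_less[OF T uV] unfolding rpath_def by blast
next
  fix w assume w: "w \<in> {w \<in> rpath T v. w < u}"
  then obtain a b where a: "(par T ^^ a) v = w" and b: "(par T ^^ b) v = u" and wV: "w \<in> verts T"
    using u unfolding rpath_eq_iterates[OF v] by auto
  show "w \<in> anc T u"
  proof (cases "a \<le> b")
    case True
    then have "(par T ^^ (b - a)) w = u"
      using a b by (metis funpow_add le_add_diff_inverse2 o_apply)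
    then have "u \<le> w"
      using rpath_le[OF T wV] rpath_subset_verts[OF v] u unfolding rpath_eq_iterates[OF wV] by blast
    then show ?thesis using w by simp
  next
    case False
    then have "(par T ^^ (a - b)) u = w"
      using a b by (metis funpow_add le_add_diff_inverse2 nat_le_linear o_apply)
    then show ?thesis
      unfolding anc_def using False wV by (auto intro!: exI[of _ "a - b"])
  qed
qed

lemma root_in_rpath:
  assumes "inc_tree T"
  shows "v \<in> verts T \<Longrightarrow> Min (verts T) \<in> rpath T v"
proof (induction v rule: less_induct)
  case (less v)
  show ?case
  proof (cases "v = Min (verts T)")
    case False
    then have "par T v < v" "par T v \<in> verts T"
      using inc_treeD(6,7)[OF assms less.prems] by auto
    then show ?thesis
      using less anc_par[OF assms less.prems False] unfolding rpath_def by auto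
  qed (simp add: rpath_def)
qed

lemma Min_rpath:
  assumes "inc_tree T" "v \<in> verts T"
  shows "Min (rpath T v) = Min (verts T)"
  using root_in_rpath[OF assms] rpath_subset_verts[OF assms(2)] inc_treeD(1)[OF assms(1)]
  by (intro Min_eqI finite_rpath[OF assms]) auto

lemma Max_rpath:
  assumes "inc_tree T" "v \<in> verts T"
  shows "Max (rpath T v) = v"
  using rpath_le[OF assms] by (intro Max_eqI finite_rpath[OF assms]) (auto simp: rpath_def)

lemma pred_in:
  assumes "finite C" "w \<in> C" "w < u"
  shows "pred_in C u \<in> C" "pred_in C u < u" "w \<le> pred_in C u"
proof -
  have P: "pred_in C u = Max {w \<in> C. w < u}" and fin: "finite {w \<in> C. w < u}"
    and w: "w \<in> {w \<in> C. w < u}"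
    unfolding pred_in_def using assms by auto
  have "Max {w \<in> C. w < u} \<in> {w \<in> C. w < u}"
    using Max_in[OF fin] w by blast
  then show "pred_in C u \<in> C" "pred_in C u < u"
    unfolding P by auto
  show "w \<le> pred_in C u"
    unfolding P using Max_ge[OF fin w] .
qed

lemma pred_in_eq_0: "\<forall>w\<in>C. u \<le> w \<Longrightarrow> pred_in C u = 0"
  unfolding pred_in_def by auto

lemma par_eq_pred_in_rpath:
  assumes T: "inc_tree T" and v: "v \<in> verts T" and u: "u \<in> rpath T v" "u \<noteq> Min (verts T)"
  shows "par T u = pred_in (rpath T v) u"
proof -
  have uV: "u \<in> verts T"
    using u(1) rpath_subset_verts[OF v] by auto
  have below: "{w \<in> rpath T v. w < u} = insert (par T u) (anc T (par T u))"
    using anc_eq_rpath_less[OF T v u(1)] anc_par[OF T uV u(2)] by simp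
  have "par T u \<in> verts T"
    using inc_treeD(6)[OF T uV u(2)] .
  then have "Max (insert (par T u) (anc T (par T u))) = par T u"
    using anc_less[OF T] finite_subset[OF anc_subset_verts inc_treeD(1)[OF T]]
    by (intro Max_eqI) fastforce+
  then show ?thesis
    unfolding pred_in_def using below by (metis (no_types, lifting) insertI1 mem_Collect_eq)
qed

lemma anc_of_pred_in_chain:
  assumes C: "finite C" "C \<subseteq> verts T"
    and chain: "\<And>b. b \<in> C \<Longrightarrow> \<exists>w\<in>C. w < b \<Longrightarrow> par T b = pred_in C b"
  shows "b \<in> C \<Longrightarrow> a \<in> C \<Longrightarrow> a < b \<Longrightarrow> a \<in> anc T b"
proof (induction b rule: less_induct)
  case (less b)
  define p where "p = pred_in C b"
  have p: "p \<in> C" "p < b" "a \<le> p"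
    using pred_in[OF C(1) less.prems(2,3)] unfolding p_def by auto
  have "par T b = p"
    using chain less.prems unfolding p_def by blast
  then have pb: "p \<in> anc T b"
    unfolding anc_def using p(1) C(2) by (auto intro!: exI[of _ 1])
  show ?case
  proof (cases "a = p")
    case False
    then have "a \<in> anc T p"
      using less.IH[OF p(2,1) less.prems(2)] p(3) by simp
    then show ?thesis using anc_trans[OF pb] by blast
  qed (use pb in simp)
qed

lemma bij_betw_pred_in:
  assumes S: "finite S"
  shows "bij_betw (pred_in S) (S - {Min S}) (S - {Max S})"
proof (rule bij_betw_imageI)
  have lt: "Min S < j" if "j \<in> S - {Min S}" for j
    using that S by (simp add: order_less_le)
  show "inj_on (pred_in S) (S - {Min S})"
  proof (rule linorder_inj_onI)
    fix j j' assume "j \<in> S - {Min S}" "j' \<in> S - {Min S}" "j < j'"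
    then show "pred_in S j \<noteq> pred_in S j'"
      using pred_in[OF S, of "Min S" j] pred_in[OF S, of j j'] lt Min_in S by fastforce
  qed auto
  show "pred_in S ` (S - {Min S}) = S - {Max S}"
  proof (intro equalityI subsetI)
    fix w assume "w \<in> pred_in S ` (S - {Min S})"
    then obtain j where "j \<in> S - {Min S}" "w = pred_in S j"
      by blast
    moreover have "Min S \<in> S"
      using \<open>j \<in> S - {Min S}\<close> S Min_in by blast
    ultimately show "w \<in> S - {Max S}"
      using pred_in[OF S, of "Min S" j] lt Max_ge[OF S, of j] by fastforce
  next
    fix w assume w: "w \<in> S - {Max S}"
    define j where "j = Min {s \<in> S. w < s}"
    have "w < Max S" "Max S \<in> S"
      using w Max_ge[OF S, of w] Max_in[OF S] by (auto simp: order_less_le)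
    then have ne: "{s \<in> S. w < s} \<noteq> {}"
      by blast
    have j: "j \<in> S" "w < j" "\<And>s. s \<in> S \<Longrightarrow> w < s \<Longrightarrow> j \<le> s"
      using Min_in[OF _ ne] S unfolding j_def by auto
    have "pred_in S j = w"
      using pred_in[OF S _ j(2)] w j(3) by (meson DiffD1 leD le_antisym linorder_neqE_nat)
    moreover have "j \<in> S - {Min S}"
      using j w Min_le[OF S, of w] by auto
    ultimately show "w \<in> pred_in S ` (S - {Min S})"
      by (metis image_eqI)
  qed
qed

lemma prod_pred_in:
  "finite S \<Longrightarrow> (\<Prod>j\<in>S - {Min S}. f (pred_in S j)) = (\<Prod>j\<in>S - {Max S}. f j)"
  using prod.reindex_bij_betw[OF bij_betw_pred_in] .

lemma kappa_eq_edge_weight: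
  fixes x :: "nat \<Rightarrow> 'a::field"
  assumes "is_inc_tree T"
  shows "kappa x T = edge_weight x T"
proof -
  let ?V = "verts T" and ?m = "Min (verts T)"
  let ?sons = "\<lambda>i. {j. j \<in> ?V - {?m} \<and> par T j = i}"
  have fin: "finite ?V" and par: "par T ` (?V - {?m}) \<subseteq> ?V"
    using assms unfolding is_inc_tree_def by auto
  have "edge_weight x T = (\<Prod>i\<in>?V. \<Prod>j\<in>?sons i. x (par T j))"
    unfolding edge_weight_def using prod.group[OF _ fin par, of "\<lambda>j. x (par T j)"] fin by simp
  also have "\<dots> = (\<Prod>i\<in>?V. x i ^ card (?sons i))"
    by (rule prod.cong) auto
  also have "\<dots> = kappa x T"
    unfolding kappa_def sons_def by (intro prod.cong arg_cong[where f = card]) auto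
  finally show ?thesis ..
qed

lemma edge_weight_split_rpath:
  assumes T: "inc_tree T" and v: "v \<in> verts T"
  shows "edge_weight x T = (\<Prod>j\<in>verts T - rpath T v. x (par T j)) * (\<Prod>j\<in>rpath T v - {v}. x j)"
proof -
  let ?V = "verts T" and ?R = "rpath T v"
  have R: "?R \<subseteq> ?V" "Min ?V \<in> ?R"
    using rpath_subset_verts[OF v] root_in_rpath[OF T v] .
  then have split: "?V - {Min ?V} = (?V - ?R) \<union> (?R - {Min ?V})"
    by auto
  have "edge_weight x T = (\<Prod>j\<in>?V - ?R. x (par T j)) * (\<Prod>j\<in>?R - {Min ?V}. x (par T j))"
    unfolding edge_weight_def split
    by (rule prod.union_disjoint) (use inc_treeD(1)[OF T] R finite_subset in auto)
  also have "(\<Prod>j\<in>?R - {Min ?V}. x (par T j)) = (\<Prod>j\<in>?R - {Min ?R}. x (pred_in ?R j))"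
    using par_eq_pred_in_rpath[OF T v] Min_rpath[OF T v] by (intro prod.cong) auto
  also have "\<dots> = (\<Prod>j\<in>?R - {v}. x j)"
    using prod_pred_in[OF finite_rpath[OF T v]] Max_rpath[OF T v] by simp
  finally show ?thesis .
qed

lemma chain_tree_verts [simp]: "verts (chain_tree S) = S"
  unfolding chain_tree_def verts_def by simp

lemma chain_tree_par: "par (chain_tree S) u = (if u \<in> S then pred_in S u else 0)"
  unfolding chain_tree_def par_def by simp

lemma inc_tree_chain_tree:
  assumes S: "finite S" "S \<noteq> {}" "0 \<notin> S"
  shows "inc_tree (chain_tree S)"
proof -
  have "pred_in S u \<in> S \<and> pred_in S u < u" if "u \<in> S" "u \<noteq> Min S" for u
    using pred_in[OF S(1) Min_in[OF S(1,2)], of u] that S(1) by (simp add: order_less_le)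
  moreover have "pred_in S (Min S) = 0"
    using S(1) by (simp add: pred_in_eq_0)
  ultimately show ?thesis
    unfolding inc_tree_def is_inc_tree_def using S Min_in[OF S(1,2)] by (auto simp: chain_tree_par)
qed

lemma anc_chain_tree: "finite S \<Longrightarrow> a \<in> S \<Longrightarrow> b \<in> S \<Longrightarrow> a < b \<Longrightarrow> a \<in> anc (chain_tree S) b"
  by (rule anc_of_pred_in_chain) (auto simp: chain_tree_par)

lemma edge_weight_chain_tree:
  assumes "finite S"
  shows "edge_weight x (chain_tree S) = (\<Prod>j\<in>S - {Max S}. x j)"
  unfolding edge_weight_def chain_tree_verts chain_tree_par
  using prod_pred_in[OF assms] by simp

section \<open>Splicing\<close>

lemma spl_verts [simp]: "verts (spl T1 v1 T2 v2) = verts T1 \<union> verts T2"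
  by (simp add: spl_def Let_def verts_def)

lemma spl_par: "par (spl T1 v1 T2 v2) u =
   (if u \<in> rpath T1 v1 \<union> rpath T2 v2 then pred_in (rpath T1 v1 \<union> rpath T2 v2) u
    else if u \<in> verts T1 then par T1 u else if u \<in> verts T2 then par T2 u else 0)"
  by (simp add: spl_def Let_def par_def)

lemma anc_subset_anc_merge:
  assumes T': "inc_tree T'" and sub: "verts T' \<subseteq> verts T" and C: "finite C" "C \<subseteq> verts T"
    and chain: "\<And>b. b \<in> C \<Longrightarrow> \<exists>w\<in>C. w < b \<Longrightarrow> par T b = pred_in C b"
    and off_chain: "\<And>u. u \<in> verts T' \<Longrightarrow> u \<notin> C \<Longrightarrow> par T u = par T' u"
    and v: "v \<in> verts T'" "rpath T' v \<subseteq> C"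
    and on_chain: "verts T' \<inter> C \<subseteq> rpath T' v"
  shows "u \<in> verts T' \<Longrightarrow> anc T' u \<subseteq> anc T u"
proof (induction u rule: less_induct)
  case (less u)
  show ?case
  proof (cases "u = Min (verts T')")
    case True
    then show ?thesis using anc_root[OF T'] by simp
  next
    case False
    define p where "p = par T' u"
    have p: "p \<in> verts T'" "p < u"
      using inc_treeD(6,7)[OF T' less.prems False] unfolding p_def by auto
    have anc_u: "anc T' u = insert p (anc T' p)"
      using anc_par[OF T' less.prems False] unfolding p_def .
    have pu: "p \<in> anc T u"
    proof (cases "u \<in> C")
      case True
      then have "u \<in> rpath T' v"
        using on_chain less.prems by blast
      then have "anc T' u \<subseteq> rpath T' v"
        using anc_trans unfolding rpath_def by blast
      then have "p \<in> C"
        using anc_u v(2) by blast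
      then show ?thesis
        using anc_of_pred_in_chain[OF C chain True _ p(2)] by blast
    next
      case False
      then have "par T u = p"
        using off_chain less.prems unfolding p_def by simp
      then show ?thesis
        unfolding anc_def using p(1) sub by (intro CollectI conjI exI[of _ 1]) auto
    qed
    have "anc T' p \<subseteq> anc T u"
      using less.IH[OF p(2,1)] anc_trans[OF pu] by blast
    then show ?thesis
      unfolding anc_u using pu by blast
  qed
qed

locale splice =
  fixes T1 T2 :: tree and v1 v2 :: nat
  assumes T1: "inc_tree T1" and T2: "inc_tree T2" and disjoint: "verts T1 \<inter> verts T2 = {}"
    and v1: "v1 \<in> verts T1" and v2: "v2 \<in> verts T2" and v2_less: "v2 < v1"
begin

abbreviation "C1 \<equiv> rpath T1 v1"
abbreviation "C2 \<equiv> rpath T2 v2"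
abbreviation "C \<equiv> C1 \<union> C2"
abbreviation "T \<equiv> spl T1 v1 T2 v2"

lemma C_subset: "C1 \<subseteq> verts T1" "C2 \<subseteq> verts T2"
  using rpath_subset_verts[OF v1] rpath_subset_verts[OF v2] .

lemma finite_C: "finite C"
  using finite_rpath[OF T1 v1] finite_rpath[OF T2 v2] by simp

lemma finite_verts: "finite (verts T)"
  using inc_treeD(1)[OF T1] inc_treeD(1)[OF T2] by simp

lemma Min_verts_in_C: "Min (verts T) \<in> C"
proof -
  have "Min (verts T) = min (Min (verts T1)) (Min (verts T2))"
    using Min_Un inc_treeD(1,2)[OF T1] inc_treeD(1,2)[OF T2] by simp
  then show ?thesis
    using root_in_rpath[OF T1 v1] root_in_rpath[OF T2 v2] by (auto simp: min_def)
qed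

lemma C_le_v1: "w \<in> C \<Longrightarrow> w \<le> v1"
  using rpath_le[OF T1 v1, of w] rpath_le[OF T2 v2, of w] v2_less by auto

lemma par_on_C: "b \<in> C \<Longrightarrow> par T b = pred_in C b"
  by (simp add: spl_par)

lemma inc_tree_spl: "inc_tree T"
proof -
  let ?m = "Min (verts T)"
  have par_vert: "par T u \<in> verts T \<and> par T u < u" if u: "u \<in> verts T" "u \<noteq> ?m" for u
  proof (cases "u \<in> C")
    case True
    have "?m < u"
      using Min_le[OF finite_verts u(1)] u(2) by simp
    from pred_in(1,2)[OF finite_C Min_verts_in_C this] show ?thesis
      unfolding par_on_C[OF True] using C_subset by auto
  next
    case False
    then have roots: "u \<noteq> Min (verts T1)" "u \<noteq> Min (verts T2)"
      using root_in_rpath[OF T1 v1] root_in_rpath[OF T2 v2] by auto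
    show ?thesis
    proof (cases "u \<in> verts T1")
      case True
      then have "par T u = par T1 u"
        using False by (simp add: spl_par)
      then show ?thesis
        using inc_treeD(6,7)[OF T1 True roots(1)] by simp
    next
      case u1: False
      then have u2: "u \<in> verts T2"
        using u(1) by simp
      then have "par T u = par T2 u"
        using False u1 by (simp add: spl_par)
      then show ?thesis
        using inc_treeD(6,7)[OF T2 u2 roots(2)] by simp
    qed
  qed
  have "\<forall>w\<in>C. ?m \<le> w"
    using C_subset Min_le[OF finite_verts] by auto
  then have par_root: "par T ?m = 0"
    unfolding par_on_C[OF Min_verts_in_C] by (rule pred_in_eq_0)
  have par_out: "par T u = 0" if "u \<notin> verts T" for u
    using that C_subset by (auto simp: spl_par)
  have "verts T \<noteq> {}" "0 \<notin> verts T"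
    using inc_treeD(2,3)[OF T1] inc_treeD(3)[OF T2] by auto
  with finite_verts par_vert par_root par_out show ?thesis
    unfolding inc_tree_def is_inc_tree_def by simp
qed

lemma anc_subset_spl1: "u \<in> verts T1 \<Longrightarrow> anc T1 u \<subseteq> anc T u"
  by (rule anc_subset_anc_merge[OF T1 _ finite_C _ par_on_C _ v1])
    (use C_subset disjoint in \<open>auto simp: spl_par\<close>)

lemma anc_subset_spl2: "u \<in> verts T2 \<Longrightarrow> anc T2 u \<subseteq> anc T u"
  by (rule anc_subset_anc_merge[OF T2 _ finite_C _ par_on_C _ v2])
    (use C_subset disjoint in \<open>auto simp: spl_par\<close>)

lemma prod_par_off_chain:
  "(\<Prod>j\<in>verts T - C. x (par T j)) =
    (\<Prod>j\<in>verts T1 - C1. x (par T1 j)) * (\<Prod>j\<in>verts T2 - C2. x (par T2 j))"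
proof -
  have "verts T - C = (verts T1 - C1) \<union> (verts T2 - C2)"
    using C_subset disjoint by auto
  then have "(\<Prod>j\<in>verts T - C. x (par T j)) =
      (\<Prod>j\<in>verts T1 - C1. x (par T j)) * (\<Prod>j\<in>verts T2 - C2. x (par T j))"
    by (simp only:) (rule prod.union_disjoint; use inc_treeD(1)[OF T1] inc_treeD(1)[OF T2] disjoint in auto)
  also have "\<dots> = (\<Prod>j\<in>verts T1 - C1. x (par T1 j)) * (\<Prod>j\<in>verts T2 - C2. x (par T2 j))"
    using C_subset disjoint by (intro arg_cong2[where f = times] prod.cong) (auto simp: spl_par)
  finally show ?thesis .
qed

lemma prod_par_on_chain:
  "(\<Prod>j\<in>C - {Min (verts T)}. x (par T j)) = (\<Prod>j\<in>C1 - {v1}. x j) * (\<Prod>j\<in>C2 - {v2}. x j) * x v2"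
proof -
  have MinC: "Min C = Min (verts T)"
    by (intro Min_eqI) (use finite_C Min_verts_in_C C_subset Min_le[OF finite_verts] in auto)
  have MaxC: "Max C = v1"
    by (intro Max_eqI) (use finite_C C_le_v1 in \<open>auto simp: rpath_def\<close>)
  have C_v1: "C - {v1} = (C1 - {v1}) \<union> C2"
    using C_subset disjoint v1 by auto
  have "(\<Prod>j\<in>C - {Min (verts T)}. x (par T j)) = (\<Prod>j\<in>C - {Min C}. x (pred_in C j))"
    using MinC par_on_C by simp
  also have "\<dots> = (\<Prod>j\<in>(C1 - {v1}) \<union> C2. x j)"
    unfolding prod_pred_in[OF finite_C] MaxC C_v1 ..
  also have "\<dots> = (\<Prod>j\<in>C1 - {v1}. x j) * (x v2 * (\<Prod>j\<in>C2 - {v2}. x j))"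
    using C_subset disjoint finite_rpath[OF T1 v1] finite_rpath[OF T2 v2]
      prod.remove[OF finite_rpath[OF T2 v2], of v2 x]
    by (subst prod.union_disjoint) (auto simp: rpath_def)
  finally show ?thesis
    by (simp add: mult_ac)
qed

lemma edge_weight_spl: "edge_weight x T = edge_weight x T1 * edge_weight x T2 * x v2"
proof -
  let ?V = "verts T" and ?m = "Min (verts T)"
  have C_V: "C \<subseteq> ?V"
    using C_subset by auto
  have "?V - {?m} = (?V - C) \<union> (C - {?m})"
    using C_V Min_verts_in_C by auto
  then have "edge_weight x T = (\<Prod>j\<in>?V - C. x (par T j)) * (\<Prod>j\<in>C - {?m}. x (par T j))"
    unfolding edge_weight_def
    by (simp only:) (rule prod.union_disjoint; use finite_verts C_V finite_subset in auto)
  then show ?thesis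
    unfolding prod_par_off_chain prod_par_on_chain
      edge_weight_split_rpath[OF T1 v1, of x] edge_weight_split_rpath[OF T2 v2, of x]
    by (simp add: mult_ac)
qed

end

section \<open>Partitions with \<open>{1}\<close> as a block\<close>

locale pi1_partition =
  fixes r :: nat and \<pi> :: "nat set set"
  assumes r_ge_2: "r \<ge> 2" and \<pi>_Pi1: "\<pi> \<in> Pi1 r"
begin

abbreviation "k \<equiv> card \<pi>"

lemma partition: "partition_on {1..r} \<pi>" and singleton_1: "{1} \<in> \<pi>"
  using \<pi>_Pi1 unfolding Pi1_def by auto

lemma Union_blocks: "\<Union>\<pi> = {1..r}"
  using partition_onD1[OF partition] by simp

lemma block_subset: "B \<in> \<pi> \<Longrightarrow> B \<subseteq> {1..r}"
  using Union_blocks by blast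

lemma finite_block: "B \<in> \<pi> \<Longrightarrow> finite B"
  using block_subset finite_subset by blast

lemma Max_block_in: "B \<in> \<pi> \<Longrightarrow> Max B \<in> B"
  using finite_block partition_onD3[OF partition] by (metis Max_in)

lemma finite_blocks: "finite \<pi>"
  using Union_blocks by (metis finite_UnionD finite_atLeastAtMost)

lemma blocks_disjoint: "A \<in> \<pi> \<Longrightarrow> B \<in> \<pi> \<Longrightarrow> A \<noteq> B \<Longrightarrow> A \<inter> B = {}"
  using disjointD[OF partition_onD2[OF partition]] by blast

lemma inj_on_Max: "inj_on Max \<pi>"
  by (rule inj_onI) (metis Max_block_in blocks_disjoint disjoint_iff)

lemma mu_strict_mono:
  assumes "1 \<le> i" "i < j" "j \<le> k"
  shows "mu \<pi> i < mu \<pi> j"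
proof -
  have "i - 1 < j - 1" "j - 1 < card (Max ` \<pi>)"
    using assms card_image[OF inj_on_Max] by auto
  then show ?thesis
    unfolding mu_def by (rule sorted_wrt_nth_less[OF strict_sorted_list_of_set, simplified])
qed

lemma mu_image: "mu \<pi> ` {1..k} = Max ` \<pi>"
proof -
  let ?l = "sorted_list_of_set (Max ` \<pi>)"
  have "{1..k} = Suc ` {0..<k}"
    by (simp add: atLeastLessThanSuc_atLeastAtMost)
  then have "mu \<pi> ` {1..k} = (\<lambda>t. mu \<pi> (Suc t)) ` {0..<k}"
    by (simp only: image_image)
  also have "\<dots> = (!) ?l ` {0..<k}"
    by (simp add: mu_def)
  also have "\<dots> = set ?l"
    using nth_image[of k ?l] card_image[OF inj_on_Max] by simp
  finally show ?thesis
    using finite_blocks by simp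
qed

lemma mu_in_Max_image: "1 \<le> i \<Longrightarrow> i \<le> k \<Longrightarrow> mu \<pi> i \<in> Max ` \<pi>"
  using mu_image by auto

lemma blk:
  assumes "1 \<le> i" "i \<le> k"
  shows "blk \<pi> i \<in> \<pi>" "Max (blk \<pi> i) = mu \<pi> i"
proof -
  obtain B where B: "B \<in> \<pi>" "Max B = mu \<pi> i"
    using mu_in_Max_image[OF assms] by (metis imageE)
  have "blk \<pi> i = B"
    unfolding blk_def
  proof (rule the_equality)
    show "B \<in> \<pi> \<and> Max B = mu \<pi> i"
      using B by simp
  qed (use B in \<open>metis inj_onD[OF inj_on_Max]\<close>)
  then show "blk \<pi> i \<in> \<pi>" "Max (blk \<pi> i) = mu \<pi> i"
    using B by simp_all
qed

lemma bij_betw_blk: "bij_betw (blk \<pi>) {1..k} \<pi>"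
proof (rule bij_betw_imageI)
  show "inj_on (blk \<pi>) {1..k}"
  proof (rule linorder_inj_onI)
    fix i j assume "i \<in> {1..k}" "j \<in> {1..k}" "i < j"
    then have "Max (blk \<pi> i) \<noteq> Max (blk \<pi> j)"
      using blk(2) mu_strict_mono[of i j] by simp
    then show "blk \<pi> i \<noteq> blk \<pi> j"
      by auto
  qed auto
  show "blk \<pi> ` {1..k} = \<pi>"
  proof (intro equalityI subsetI)
    fix B assume B: "B \<in> \<pi>"
    then obtain i where i: "i \<in> {1..k}" "mu \<pi> i = Max B"
      using mu_image by (metis imageE imageI)
    then have "blk \<pi> i = B"
      using blk[of i] inj_onD[OF inj_on_Max _ _ B] by simp
    then show "B \<in> blk \<pi> ` {1..k}"
      using i by blast
  qed (use blk in auto)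
qed

lemma Union_blk: "(\<Union>i\<in>{1..k}. blk \<pi> i) = {1..r}"
  using bij_betw_imp_surj_on[OF bij_betw_blk] Union_blocks by simp

lemma blk_disjoint:
  assumes "i \<in> {1..k}" "j \<in> {1..k}" "i \<noteq> j"
  shows "blk \<pi> i \<inter> blk \<pi> j = {}"
proof (rule blocks_disjoint)
  show "blk \<pi> i \<noteq> blk \<pi> j"
    using inj_onD[OF bij_betw_imp_inj_on[OF bij_betw_blk]] assms by blast
qed (use assms blk in auto)

lemma mu_in_blk: "1 \<le> i \<Longrightarrow> i \<le> k \<Longrightarrow> mu \<pi> i \<in> blk \<pi> i"
  using blk Max_block_in by metis

lemma blk_le_mu: "1 \<le> i \<Longrightarrow> i \<le> k \<Longrightarrow> blk \<pi> i \<subseteq> {..mu \<pi> i}"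
  using blk Max_ge[OF finite_block] by (metis atMost_iff subsetI)

lemma blk_subset: "1 \<le> i \<Longrightarrow> i \<le> k \<Longrightarrow> blk \<pi> i \<subseteq> {1..r}"
  using blk block_subset by blast

lemma mu_range: "1 \<le> i \<Longrightarrow> i \<le> k \<Longrightarrow> mu \<pi> i \<in> {1..r}"
  using mu_in_blk blk_subset by blast

lemma block_with_Max_r: "\<exists>B\<in>\<pi>. Max B = r"
proof -
  have "r \<in> \<Union>\<pi>"
    using Union_blocks r_ge_2 by simp
  then obtain B where B: "B \<in> \<pi>" "r \<in> B"
    by blast
  then have "Max B = r"
    using block_subset[OF B(1)] finite_block[OF B(1)] by (intro Max_eqI) auto
  then show ?thesis
    using B(1) by blast
qed

lemma card_ge_2: "k \<ge> 2"
proof -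
  obtain B where B: "B \<in> \<pi>" "Max B = r"
    using block_with_Max_r by blast
  then have "B \<noteq> {1}"
    using r_ge_2 by auto
  then have "card {{1}, B} = 2"
    by simp
  moreover have "{{1}, B} \<subseteq> \<pi>"
    using B(1) singleton_1 by simp
  ultimately show ?thesis
    using card_mono[OF finite_blocks] by metis
qed

lemma mu_1: "mu \<pi> 1 = 1"
proof -
  obtain i where i: "i \<in> {1..k}" "mu \<pi> i = 1"
    using mu_image singleton_1 by (metis Max_singleton imageE imageI)
  then have "mu \<pi> 1 \<le> 1"
    using mu_strict_mono[of 1 i] by (cases "i = 1") auto
  then show ?thesis
    using mu_range[of 1] card_ge_2 by simp
qed

lemma blk_1: "blk \<pi> 1 = {1}"
proof -
  have "Max (blk \<pi> 1) = Max {1::nat}"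
    using blk(2)[of 1] card_ge_2 mu_1 by simp
  then show ?thesis
    using inj_onD[OF inj_on_Max _ blk(1) singleton_1] card_ge_2 by simp
qed

end

section \<open>The construction \<open>\<psi>\<^sub>\<pi>\<close>\<close>

locale psi_construction = pi1_partition +
  fixes c :: "nat \<Rightarrow> nat"
  assumes c_Cset: "c \<in> Cset \<pi>"
begin

lemma c_range: "2 \<le> i \<Longrightarrow> i < k \<Longrightarrow> 1 \<le> c i \<and> c i \<le> mu \<pi> i"
  using c_Cset unfolding Cset_def by simp

text \<open>Before stage \<open>i\<close> only \<open>\<tau>\<^sub>1\<close> and \<open>\<tau>\<^sub>i, \<dots>, \<tau>\<^sub>k\<close> are still in use; the others have been
  spliced into them.\<close>

abbreviation remaining :: "nat \<Rightarrow> nat set" where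
  "remaining i \<equiv> insert 1 {i..k}"

definition chains_weight :: "(nat \<Rightarrow> 'a::comm_monoid_mult) \<Rightarrow> 'a" where
  "chains_weight x = (\<Prod>l\<in>{1..k}. \<Prod>j\<in>blk \<pi> l - {mu \<pi> l}. x j)"

definition weight_invariant :: "(nat \<Rightarrow> 'a::comm_monoid_mult) \<Rightarrow> nat \<Rightarrow> (nat \<Rightarrow> tree) \<Rightarrow> nat \<Rightarrow> bool"
  where "weight_invariant x i \<tau> \<nu> \<longleftrightarrow>
    (\<Prod>l\<in>remaining i. edge_weight x (\<tau> l)) * x \<nu> = chains_weight x * x 1 * (\<Prod>m\<in>{2..<i}. x (c m))"

lemma chains_weight_times_mu: "chains_weight x * (\<Prod>l\<in>{1..k}. x (mu \<pi> l)) = (\<Prod>j\<in>{1..r}. x j)"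
proof -
  have "(\<Prod>j\<in>{1..r}. x j) = (\<Prod>l\<in>{1..k}. \<Prod>j\<in>blk \<pi> l. x j)"
    unfolding Union_blk[symmetric]
    by (rule prod.UNION_disjoint) (use blk_disjoint finite_block blk(1) in auto)
  also have "\<dots> = (\<Prod>l\<in>{1..k}. x (mu \<pi> l) * (\<Prod>j\<in>blk \<pi> l - {mu \<pi> l}. x j))"
    using prod.remove[OF finite_block[OF blk(1)] mu_in_blk] by (intro prod.cong) auto
  finally show ?thesis
    unfolding chains_weight_def prod.distrib by (simp add: mult.commute)
qed

end

locale construction_stage = psi_construction +
  fixes i :: nat and \<tau> :: "nat \<Rightarrow> tree" and \<nu> :: nat
  assumes stage_range: "2 \<le> i" "i \<le> k"
    and inc_trees: "l \<in> remaining i \<Longrightarrow> inc_tree (\<tau> l)"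
    and disjoint_trees:
      "l \<in> remaining i \<Longrightarrow> l' \<in> remaining i \<Longrightarrow> l \<noteq> l' \<Longrightarrow> verts (\<tau> l) \<inter> verts (\<tau> l') = {}"
    and cover: "(\<Union>l\<in>remaining i. verts (\<tau> l)) = {1..r}"
    and mu_in_tree: "l \<in> {i..k} \<Longrightarrow> mu \<pi> l \<in> verts (\<tau> l)"
    and tree_le_mu: "l \<in> {i..k} \<Longrightarrow> verts (\<tau> l) \<subseteq> {..mu \<pi> l}"
    and nu_in: "\<nu> \<in> verts (\<tau> 1)"
    and nu_less: "\<nu> < mu \<pi> i"
    and blocks_anc: "l \<in> remaining i \<Longrightarrow> B \<in> \<pi> \<Longrightarrow> a \<in> B \<Longrightarrow> b \<in> B \<Longrightarrow> a < b \<Longrightarrow>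
      b \<in> verts (\<tau> l) \<Longrightarrow> a \<in> anc (\<tau> l) b"

lemma (in psi_construction) construction_stage_init:
  "construction_stage r \<pi> c 2 (\<lambda>l. chain_tree (blk \<pi> l)) 1"
proof (intro construction_stage.intro construction_stage_axioms.intro psi_construction_axioms)
  have remaining_2: "remaining 2 = {1..k}"
    using card_ge_2 by auto
  have blk_props: "finite (blk \<pi> l)" "blk \<pi> l \<noteq> {}" "0 \<notin> blk \<pi> l" if "l \<in> {1..k}" for l
    using that finite_block blk(1) mu_in_blk blk_subset by fastforce+
  show "inc_tree (chain_tree (blk \<pi> l))" if "l \<in> remaining 2" for l
    using that blk_props inc_tree_chain_tree unfolding remaining_2 by blast
  show "verts (chain_tree (blk \<pi> l)) \<inter> verts (chain_tree (blk \<pi> l')) = {}"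
    if "l \<in> remaining 2" "l' \<in> remaining 2" "l \<noteq> l'" for l l'
    using that blk_disjoint unfolding remaining_2 by simp
  show "(\<Union>l\<in>remaining 2. verts (chain_tree (blk \<pi> l))) = {1..r}"
    using Union_blk unfolding remaining_2 by simp
  show "mu \<pi> l \<in> verts (chain_tree (blk \<pi> l))" "verts (chain_tree (blk \<pi> l)) \<subseteq> {..mu \<pi> l}"
    if "l \<in> {2..k}" for l
    using that mu_in_blk blk_le_mu by auto
  show "1 \<in> verts (chain_tree (blk \<pi> 1))"
    using blk_1 by simp
  show "1 < mu \<pi> 2"
    using mu_strict_mono[of 1 2] card_ge_2 mu_1 by simp
  show "a \<in> anc (chain_tree (blk \<pi> l)) b"
    if "l \<in> remaining 2" "B \<in> \<pi>" "a \<in> B" "b \<in> B" "a < b" "b \<in> verts (chain_tree (blk \<pi> l))"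
    for l B a b
  proof -
    have l: "l \<in> {1..k}"
      using that(1) unfolding remaining_2 .
    then have "B = blk \<pi> l"
      using that blocks_disjoint[OF \<open>B \<in> \<pi>\<close> blk(1), of l] by auto
    then show ?thesis
      using that(3-6) anc_chain_tree[OF blk_props(1)[OF l]] by simp
  qed
  show "2 \<le> (2::nat)" "2 \<le> k"
    using card_ge_2 by simp_all
qed

lemma (in psi_construction) weight_invariant_init:
  "weight_invariant x 2 (\<lambda>l. chain_tree (blk \<pi> l)) 1"
proof -
  have "remaining 2 = {1..k}"
    using card_ge_2 by auto
  then have "(\<Prod>l\<in>remaining 2. edge_weight x (chain_tree (blk \<pi> l))) = chains_weight x"
    unfolding chains_weight_def
  proof (rule prod.cong)
    fix l assume "l \<in> {1..k}"
    then have "1 \<le> l" "l \<le> k"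
      by simp_all
    then show "edge_weight x (chain_tree (blk \<pi> l)) = (\<Prod>j\<in>blk \<pi> l - {mu \<pi> l}. x j)"
      using edge_weight_chain_tree[OF finite_block[OF blk(1)]] blk(2) by metis
  qed
  then show ?thesis
    unfolding weight_invariant_def by simp
qed

context construction_stage
begin

lemma remaining_eq_insert: "remaining i = insert i (remaining (Suc i))"
  using stage_range by auto

lemma stage_not_remaining: "i \<notin> remaining (Suc i)"
  using stage_range by auto

lemma remaining_Suc: "l \<in> remaining (Suc i) \<Longrightarrow> l \<in> remaining i \<and> l \<noteq> i"
  using remaining_eq_insert stage_not_remaining by auto

context
  fixes t v
  assumes stage_less: "i < k"
    and t: "t \<in> remaining (Suc i)" and v: "v \<in> verts (\<tau> t)" "v < mu \<pi> i"
begin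

abbreviation merged :: "nat \<Rightarrow> tree" where
  "merged \<equiv> \<tau>(t := spl (\<tau> i) (mu \<pi> i) (\<tau> t) v)"

lemma t_remaining: "t \<in> remaining i" and t_ne_i: "t \<noteq> i"
  using remaining_Suc[OF t] by auto

lemma splice_stage: "splice (\<tau> i) (\<tau> t) (mu \<pi> i) v"
proof
  show "inc_tree (\<tau> i)" "inc_tree (\<tau> t)"
    using inc_trees[of i] inc_trees[OF t_remaining] stage_range by auto
  show "verts (\<tau> i) \<inter> verts (\<tau> t) = {}"
    using disjoint_trees[of i t] stage_range t_remaining t_ne_i by simp
  show "mu \<pi> i \<in> verts (\<tau> i)"
    using mu_in_tree stage_range by simp
qed (use v in auto)

interpretation merged: splice "\<tau> i" "\<tau> t" "mu \<pi> i" v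
  by (rule splice_stage)

lemma inc_tree_merged: "l \<in> remaining (Suc i) \<Longrightarrow> inc_tree (merged l)"
  using merged.inc_tree_spl inc_trees remaining_Suc by (cases "l = t") auto

lemma merged_disjoint:
  assumes "l \<in> remaining (Suc i)" "l' \<in> remaining (Suc i)" "l \<noteq> l'"
  shows "verts (merged l) \<inter> verts (merged l') = {}"
  using assms remaining_Suc[OF assms(1)] remaining_Suc[OF assms(2)] t_remaining stage_range
    disjoint_trees[of l l'] disjoint_trees[of i l'] disjoint_trees[of t l']
    disjoint_trees[of l i] disjoint_trees[of l t]
  by (cases "l = t"; cases "l' = t") auto

lemma Union_merged: "(\<Union>l\<in>remaining (Suc i). verts (merged l)) = {1..r}"
proof -
  let ?R = "remaining (Suc i) - {t}"
  have "(\<Union>l\<in>?R. verts (merged l)) = (\<Union>l\<in>?R. verts (\<tau> l))"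
    by (rule SUP_cong) auto
  moreover have "remaining (Suc i) = insert t ?R" "remaining i = insert i (insert t ?R)"
    using remaining_eq_insert t by blast+
  ultimately have "(\<Union>l\<in>remaining (Suc i). verts (merged l)) = (\<Union>l\<in>remaining i. verts (\<tau> l))"
    by (metis (no_types, lifting) UN_insert Un_assoc fun_upd_same spl_verts)
  then show ?thesis
    using cover by simp
qed

lemma merged_le_mu:
  assumes "l \<in> {Suc i..k}"
  shows "mu \<pi> l \<in> verts (merged l)" "verts (merged l) \<subseteq> {..mu \<pi> l}"
proof -
  have l: "l \<in> {i..k}"
    using assms by simp
  have "verts (\<tau> i) \<subseteq> {..mu \<pi> l}"
    using tree_le_mu[of i] mu_strict_mono[of i l] stage_range assms by fastforce
  then show "mu \<pi> l \<in> verts (merged l)" "verts (merged l) \<subseteq> {..mu \<pi> l}"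
    using mu_in_tree[OF l] tree_le_mu[OF l] by auto
qed

lemma blocks_anc_merged:
  assumes l: "l \<in> remaining (Suc i)" and block: "B \<in> \<pi>" "a \<in> B" "b \<in> B" "a < b"
    and b: "b \<in> verts (merged l)"
  shows "a \<in> anc (merged l) b"
proof (cases "l = t")
  case True
  then consider "b \<in> verts (\<tau> i)" | "b \<in> verts (\<tau> t)"
    using b by auto
  then have "a \<in> anc merged.T b"
  proof cases
    case 1
    then show ?thesis
      using merged.anc_subset_spl1 blocks_anc[OF _ block] stage_range by auto
  next
    case 2
    then show ?thesis
      using merged.anc_subset_spl2 blocks_anc[OF t_remaining block] by auto
  qed
  then show ?thesis
    using True by simp
next
  case False
  then show ?thesis
    using b blocks_anc[OF _ block] remaining_Suc[OF l] by simp
qed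

lemma merged_stage:
  assumes "\<nu>' \<in> verts (\<tau> 1) \<or> (t = 1 \<and> \<nu>' \<in> verts (\<tau> i))" "\<nu>' \<le> mu \<pi> i"
  shows "construction_stage r \<pi> c (Suc i) merged \<nu>'"
proof (intro construction_stage.intro construction_stage_axioms.intro psi_construction_axioms)
  show "\<nu>' \<in> verts (merged 1)"
    using assms(1) by (cases "t = 1") auto
  show "\<nu>' < mu \<pi> (Suc i)"
    using assms(2) mu_strict_mono[of i "Suc i"] stage_range stage_less by simp
qed (use stage_range stage_less inc_tree_merged merged_disjoint Union_merged merged_le_mu
    blocks_anc_merged in auto)

lemma edge_weights_merged:
  "(\<Prod>l\<in>remaining (Suc i). edge_weight x (merged l)) = (\<Prod>l\<in>remaining i. edge_weight x (\<tau> l)) * x v"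
proof -
  let ?R = "remaining (Suc i) - {t}"
  let ?W = "\<lambda>\<sigma> l. edge_weight x (\<sigma> l)"
  have rest: "(\<Prod>l\<in>?R. ?W merged l) = (\<Prod>l\<in>?R. ?W \<tau> l)"
    by (rule prod.cong) auto
  have "(\<Prod>l\<in>remaining (Suc i). ?W merged l) = ?W merged t * (\<Prod>l\<in>?R. ?W merged l)"
    by (rule prod.remove) (use t in auto)
  also have "\<dots> = ?W \<tau> i * ?W \<tau> t * x v * (\<Prod>l\<in>?R. ?W \<tau> l)"
    unfolding rest by (simp only: fun_upd_same merged.edge_weight_spl)
  also have "(\<Prod>l\<in>?R. ?W \<tau> l) * ?W \<tau> t = (\<Prod>l\<in>remaining (Suc i). ?W \<tau> l)"
    using prod.remove[of "remaining (Suc i)" t "?W \<tau>"] t by (simp add: mult.commute)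
  moreover have "(\<Prod>l\<in>remaining i. ?W \<tau> l) = ?W \<tau> i * (\<Prod>l\<in>remaining (Suc i). ?W \<tau> l)"
    unfolding remaining_eq_insert using stage_not_remaining by simp
  ultimately show ?thesis
    by (simp add: mult_ac)
qed

lemma merged_weight:
  assumes "weight_invariant x i \<tau> \<nu>" "x v * x \<nu>' = x \<nu> * x (c i)"
  shows "weight_invariant x (Suc i) merged \<nu>'"
proof -
  have "(\<Prod>l\<in>remaining (Suc i). edge_weight x (merged l)) * x \<nu>' =
      (\<Prod>l\<in>remaining i. edge_weight x (\<tau> l)) * x \<nu> * x (c i)"
    unfolding edge_weights_merged mult.assoc assms(2) ..
  also have "\<dots> = chains_weight x * x 1 * (\<Prod>m\<in>{2..<Suc i}. x (c m))"
    using assms(1) stage_range unfolding weight_invariant_def by (simp add: mult_ac)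
  finally show ?thesis
    unfolding weight_invariant_def .
qed

end

lemma psi_stage_cases:
  assumes "i < k"
  obtains t v \<nu>' where "t \<in> remaining (Suc i)" "v \<in> verts (\<tau> t)" "v < mu \<pi> i"
    "psi_stage \<pi> c i (\<tau>, \<nu>) = (\<tau>(t := spl (\<tau> i) (mu \<pi> i) (\<tau> t) v), \<nu>')"
    "\<nu>' \<in> verts (\<tau> 1) \<or> (t = 1 \<and> \<nu>' \<in> verts (\<tau> i))" "\<nu>' \<le> mu \<pi> i"
    "(v, \<nu>') = (\<nu>, c i) \<or> (v, \<nu>') = (c i, \<nu>)"
proof (cases "c i \<in> verts (\<tau> 1) \<or> c i \<in> verts (\<tau> i)")
  case True
  then show ?thesis
    using that[of 1 \<nu> "c i"] nu_in nu_less c_range[OF stage_range(1) assms]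
    unfolding psi_stage_def by auto
next
  case False
  have "c i \<in> {1..r}"
    using c_range[OF stage_range(1) assms] mu_range[of i] stage_range by auto
  then obtain j where j: "j \<in> remaining i" "c i \<in> verts (\<tau> j)"
    using cover by blast
  then have j_range: "i < j" "j \<le> k"
    using False by (auto simp: order_le_less)
  have "(THE j. i < j \<and> j \<le> k \<and> c i \<in> verts (\<tau> j)) = j"
  proof (rule the_equality)
    fix j' assume "i < j' \<and> j' \<le> k \<and> c i \<in> verts (\<tau> j')"
    then show "j' = j"
      using disjoint_trees[of j' j] j by auto
  qed (use j j_range in simp)
  moreover have "c i < mu \<pi> i"
    using False mu_in_tree[of i] c_range[OF stage_range(1) assms] stage_range
    by (auto simp: order_le_less)
  ultimately show ?thesis
    using that[of j "c i" \<nu>] False j j_range nu_in nu_less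
    unfolding psi_stage_def Let_def by simp
qed

lemma next_stage:
  assumes "i < k"
  shows "construction_stage r \<pi> c (Suc i) (fst (psi_stage \<pi> c i (\<tau>, \<nu>))) (snd (psi_stage \<pi> c i (\<tau>, \<nu>)))"
    and "weight_invariant x i \<tau> \<nu> \<Longrightarrow>
      weight_invariant x (Suc i) (fst (psi_stage \<pi> c i (\<tau>, \<nu>))) (snd (psi_stage \<pi> c i (\<tau>, \<nu>)))"
proof -
  obtain t v \<nu>' where t: "t \<in> remaining (Suc i)" and v: "v \<in> verts (\<tau> t)" "v < mu \<pi> i"
    and step: "psi_stage \<pi> c i (\<tau>, \<nu>) = (\<tau>(t := spl (\<tau> i) (mu \<pi> i) (\<tau> t) v), \<nu>')"
    and \<nu>': "\<nu>' \<in> verts (\<tau> 1) \<or> (t = 1 \<and> \<nu>' \<in> verts (\<tau> i))" "\<nu>' \<le> mu \<pi> i"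
    and swap: "(v, \<nu>') = (\<nu>, c i) \<or> (v, \<nu>') = (c i, \<nu>)"
    using psi_stage_cases[OF assms] .
  show "construction_stage r \<pi> c (Suc i) (fst (psi_stage \<pi> c i (\<tau>, \<nu>))) (snd (psi_stage \<pi> c i (\<tau>, \<nu>)))"
    unfolding step using merged_stage[OF assms t v \<nu>'] by simp
  have "x v * x \<nu>' = x \<nu> * x (c i)"
    using swap by (auto simp: mult.commute)
  then show "weight_invariant x i \<tau> \<nu> \<Longrightarrow>
      weight_invariant x (Suc i) (fst (psi_stage \<pi> c i (\<tau>, \<nu>))) (snd (psi_stage \<pi> c i (\<tau>, \<nu>)))"
    unfolding step using merged_weight[OF assms t v] by simp
qed

lemma final_splice:
  assumes "i = k"
  shows "splice (\<tau> k) (\<tau> 1) (mu \<pi> k) \<nu>"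
proof
  show "inc_tree (\<tau> k)" "inc_tree (\<tau> 1)"
    using inc_trees assms by auto
  show "verts (\<tau> k) \<inter> verts (\<tau> 1) = {}"
    using disjoint_trees[of k 1] assms card_ge_2 by simp
  show "mu \<pi> k \<in> verts (\<tau> k)" "\<nu> < mu \<pi> k"
    using mu_in_tree[of k] nu_less assms by auto
qed (rule nu_in)

lemma final_tree_in_E:
  assumes "i = k"
  shows "inE r \<pi> (spl (\<tau> k) (mu \<pi> k) (\<tau> 1) \<nu>)"
proof -
  interpret splice "\<tau> k" "\<tau> 1" "mu \<pi> k" \<nu>
    using final_splice[OF assms] .
  have remaining_k: "remaining i = {1, k}"
    using assms by auto
  have "verts T = {1..r}"
    using cover unfolding remaining_k by auto
  moreover have "a \<in> anc T b" if "B \<in> \<pi>" "a \<in> B" "b \<in> B" "a < b" for B a b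
  proof -
    have "b \<in> verts (\<tau> k) \<or> b \<in> verts (\<tau> 1)"
      using cover block_subset that unfolding remaining_k by auto
    then show ?thesis
      using blocks_anc[OF _ that] anc_subset_spl1 anc_subset_spl2 unfolding remaining_k by blast
  qed
  ultimately show ?thesis
    using inc_tree_spl unfolding inE_def inc_tree_def by blast
qed

lemma final_tree_weight:
  assumes "i = k" "weight_invariant x i \<tau> \<nu>"
  shows "edge_weight x (spl (\<tau> k) (mu \<pi> k) (\<tau> 1) \<nu>) = chains_weight x * x 1 * (\<Prod>m\<in>{2..<k}. x (c m))"
proof -
  interpret splice "\<tau> k" "\<tau> 1" "mu \<pi> k" \<nu>
    using final_splice[OF assms(1)] .
  have "remaining i = {1, k}"
    using assms(1) by auto
  then have "edge_weight x (\<tau> k) * edge_weight x (\<tau> 1) * x \<nu> = chains_weight x * x 1 * (\<Prod>m\<in>{2..<k}. x (c m))"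
    using assms card_ge_2 unfolding weight_invariant_def by (simp add: mult_ac)
  then show ?thesis
    unfolding edge_weight_spl .
qed

end

context psi_construction
begin

abbreviation state_before :: "nat \<Rightarrow> (nat \<Rightarrow> tree) \<times> nat" where
  "state_before i \<equiv> fold (psi_stage \<pi> c) [2..<i] (psi_init \<pi>)"

lemma construction_stage_before:
  "2 \<le> i \<Longrightarrow> i \<le> k \<Longrightarrow> construction_stage r \<pi> c i (fst (state_before i)) (snd (state_before i))"
proof (induction i rule: nat_induct_at_least)
  case base
  then show ?case
    using construction_stage_init by (simp add: psi_init_def)
next
  case (Suc i)
  then interpret construction_stage r \<pi> c i "fst (state_before i)" "snd (state_before i)"
    by simp
  show ?case
    using next_stage(1) Suc by simp
qed

lemma weight_invariant_before:
  "2 \<le> i \<Longrightarrow> i \<le> k \<Longrightarrow> weight_invariant x i (fst (state_before i)) (snd (state_before i))"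
proof (induction i rule: nat_induct_at_least)
  case base
  then show ?case
    using weight_invariant_init by (simp add: psi_init_def)
next
  case (Suc i)
  interpret construction_stage r \<pi> c i "fst (state_before i)" "snd (state_before i)"
    using construction_stage_before Suc by simp
  show ?case
    using next_stage(2) Suc by simp
qed

lemma psi_eq_final_splice:
  "psi \<pi> c = spl (fst (state_before k) k) (mu \<pi> k) (fst (state_before k) 1) (snd (state_before k))"
  unfolding psi_def by (simp add: Let_def)

lemma psi_in_E: "inE r \<pi> (psi \<pi> c)"
proof -
  interpret construction_stage r \<pi> c k "fst (state_before k)" "snd (state_before k)"
    using construction_stage_before card_ge_2 by simp
  show ?thesis
    unfolding psi_eq_final_splice using final_tree_in_E by simp
qed

lemma kappa_psi:
  fixes x :: "nat \<Rightarrow> 'a::field"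
  assumes nonzero: "\<forall>i\<in>{1..r}. x i \<noteq> 0"
  shows "kappa x (psi \<pi> c) = omega x r \<pi> c"
proof -
  interpret construction_stage r \<pi> c k "fst (state_before k)" "snd (state_before k)"
    using construction_stage_before card_ge_2 by simp
  have "kappa x (psi \<pi> c) = edge_weight x (psi \<pi> c)"
    using kappa_eq_edge_weight psi_in_E unfolding inE_def by blast
  also have "\<dots> = chains_weight x * x 1 * (\<Prod>m\<in>{2..<k}. x (c m))"
    unfolding psi_eq_final_splice
    using final_tree_weight[OF refl weight_invariant_before[OF card_ge_2 order_refl]] .
  also have "\<dots> = omega x r \<pi> c"
  proof -
    have mu_prod: "(\<Prod>l\<in>{1..k}. x (mu \<pi> l)) = x 1 * (\<Prod>l\<in>{2..k}. x (mu \<pi> l))"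
      using card_ge_2 mu_1 by (simp add: prod.atLeast_Suc_atMost numeral_2_eq_2)
    have "(\<Prod>l\<in>{2..k}. x (mu \<pi> l)) \<noteq> 0"
      using nonzero mu_range by (simp add: prod_zero_iff)
    then show ?thesis
      using chains_weight_times_mu[of x] unfolding omega_def mu_prod by (simp add: field_simps)
  qed
  finally show ?thesis .
qed

end

theorem proposition2p7:
  fixes r :: nat and \<pi> :: "nat set set" and c :: "nat \<Rightarrow> nat"
  assumes "r \<ge> 2" and "\<pi> \<in> Pi1 r" and "c \<in> Cset \<pi>"
  shows "inE r \<pi> (psi \<pi> c) \<and>
    (\<forall>x :: nat \<Rightarrow> 'a::field. (\<forall>i\<in>{1..r}. x i \<noteq> 0) \<longrightarrow>
       kappa x (psi \<pi> c) = omega x r \<pi> c)"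
proof -
  interpret psi_construction r \<pi> c
    using assms by unfold_locales
  show ?thesis
    using psi_in_E kappa_psi by blast
qed

end
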